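(* For every $n\geq 3$, the $n$-dimensional hypercube $H_n$, as an instance of Bipartite Influence, satisfies $H_n=0$.
   Context: $H_n$ has vertex set $\{0,1\}^n$, two vertices adjacent iff they differ in exactly one coordinate; a vertex is black if it has an odd number of nonzero coordinates and white otherwise. Bipartite Influence: on a bipartite graph with black and white vertices (edges between colours), isolated vertices are credited to the owner of their colour (black to Left, white to Right); Left picks a black vertex $x$ and removes $x$, its neighbours and the vertices that become isolated (credited to her); Right likewise with white vertices; score = Left's total minus Right's. $G=0$ means $Ls(G+X)=Ls(X)$ and $Rs(G+X)=Rs(X)$ for every position $X$ (disjoint union as sum), where $Ls,Rs$ are the optimal scores with Left, resp. Right, moving first. *)

theory Defs
  imports Main
begin

text \<open>A position of Bipartite Influence over vertex type 'a: an adjacency relation,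
  a colouring (True = black, False = white) and the finite set of remaining vertices.
  Only the subgraph induced on the vertex set matters.\<close>

type_synonym 'a pos = "('a \<Rightarrow> 'a \<Rightarrow> bool) \<times> ('a \<Rightarrow> bool) \<times> 'a set"

definition wf_pos :: "'a pos \<Rightarrow> bool" where
  "wf_pos G = (case G of (adj, blk, V) \<Rightarrow>
     finite V \<and> (\<forall>x y. adj x y \<longrightarrow> adj y x) \<and> (\<forall>x. \<not> adj x x)
     \<and> (\<forall>x y. adj x y \<longrightarrow> blk x \<noteq> blk y))"

definition cnbhd :: "('a \<Rightarrow> 'a \<Rightarrow> bool) \<Rightarrow> 'a set \<Rightarrow> 'a \<Rightarrow> 'a set" where
  "cnbhd adj V x = insert x {y \<in> V. adj x y}"

definition has_edge :: "('a \<Rightarrow> 'a \<Rightarrow> bool) \<Rightarrow> 'a set \<Rightarrow> bool" where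
  "has_edge adj V = (\<exists>x\<in>V. \<exists>y\<in>V. adj x y)"

text \<open>Credit of isolated vertices: black to Left, white to Right.\<close>
definition bal :: "('a \<Rightarrow> bool) \<Rightarrow> 'a set \<Rightarrow> int" where
  "bal blk V = int (card {v \<in> V. blk v}) - int (card {v \<in> V. \<not> blk v})"

text \<open>Optimal scores (Left minus Right) with Left (ILs) resp. Right (IRs) to move.
  A move by Left on a non-isolated black vertex x removes the closed neighbourhood
  N[x] and credits its vertices to Left; vertices that become isolated are
  (necessarily black and) kept, being credited to Left via bal at the end.\<close>
function ILs :: "('a \<Rightarrow> 'a \<Rightarrow> bool) \<Rightarrow> ('a \<Rightarrow> bool) \<Rightarrow> 'a set \<Rightarrow> int"
  and IRs :: "('a \<Rightarrow> 'a \<Rightarrow> bool) \<Rightarrow> ('a \<Rightarrow> bool) \<Rightarrow> 'a set \<Rightarrow> int" where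
  "ILs adj blk V = (if \<not> finite V \<or> \<not> has_edge adj V then bal blk V
     else Max ((\<lambda>x. int (card (cnbhd adj V x)) + IRs adj blk (V - cnbhd adj V x))
                ` {x \<in> V. blk x \<and> (\<exists>y\<in>V. adj x y)}))"
| "IRs adj blk V = (if \<not> finite V \<or> \<not> has_edge adj V then bal blk V
     else Min ((\<lambda>x. ILs adj blk (V - cnbhd adj V x) - int (card (cnbhd adj V x)))
                ` {x \<in> V. \<not> blk x \<and> (\<exists>y\<in>V. adj x y)}))"
  by pat_completeness auto
termination
  by (relation "measure (\<lambda>p. case p of Inl (a, b, V) \<Rightarrow> card V | Inr (a, b, V) \<Rightarrow> card V)")
     (auto simp: cnbhd_def intro!: psubset_card_mono)

definition Ls :: "'a pos \<Rightarrow> int" where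
  "Ls G = (case G of (adj, blk, V) \<Rightarrow> ILs adj blk V)"

definition Rs :: "'a pos \<Rightarrow> int" where
  "Rs G = (case G of (adj, blk, V) \<Rightarrow> IRs adj blk V)"

definition psum :: "'a pos \<Rightarrow> 'b pos \<Rightarrow> ('a + 'b) pos" where
  "psum G X = (case G of (adj1, blk1, V1) \<Rightarrow> case X of (adj2, blk2, V2) \<Rightarrow>
     ((\<lambda>u v. case (u, v) of (Inl a, Inl a') \<Rightarrow> adj1 a a' | (Inr b, Inr b') \<Rightarrow> adj2 b b'
                         | _ \<Rightarrow> False),
      case_sum blk1 blk2,
      Inl ` V1 \<union> Inr ` V2))"

definition hypercube :: "nat \<Rightarrow> bool list pos" where
  "hypercube n =
     ((\<lambda>xs ys. length xs = length ys \<and> card {i. i < length xs \<and> xs ! i \<noteq> ys ! i} = 1),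
      (\<lambda>xs. odd (length (filter id xs))),
      {xs. length xs = n})"

end

(*
  For odd k with 3 <= k <= n, flipping the first k coordinates is an involutive automorphism of H_n
  that reverses colours and moves every vertex to distance k >= 3, so the closed neighbourhoods of a
  vertex and of its image are disjoint. In H_n + X, Left answers every Right move y in H_n by the image
  of y, which removes exactly the image of N[y] and leaves a symmetric copy again; Right's moves in X
  are handled by induction. When X has no edge left, Left may have to move first in the symmetric
  remainder; this costs nothing, because moving first never hurts Left (Rs <= Ls), which in turn rests
  on the fact that a free move at a black vertex never hurts Left. This gives Ls X <= Ls (H_n + X) and
  Rs X <= Rs (H_n + X), and exchanging the colours gives the reverse inequalities.
*)
theory Submission
  imports Defs
begin

declare ILs.simps [simp del] IRs.simps [simp del]

lemma cnbhd_subset: "x \<in> V \<Longrightarrow> cnbhd adj V x \<subseteq> V"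
  by (auto simp: cnbhd_def)

lemma finite_cnbhd: "finite V \<Longrightarrow> finite (cnbhd adj V x)"
  by (simp add: cnbhd_def)

lemma Diff_cnbhd_psubset: "x \<in> V \<Longrightarrow> V - cnbhd adj V x \<subset> V"
  by (auto simp: cnbhd_def)

lemma cnbhd_Diff: "x \<notin> D \<Longrightarrow> cnbhd adj (V - D) x = cnbhd adj V x - D"
  by (auto simp: cnbhd_def)

lemma card_Diff_cnbhd:
  "finite V \<Longrightarrow> x \<in> V \<Longrightarrow> int (card (V - cnbhd adj V x)) = int (card V) - int (card (cnbhd adj V x))"
  by (simp add: card_Diff_subset cnbhd_subset finite_cnbhd card_mono of_nat_diff)

lemma card_plus_card_Diff_commute:
  "finite A \<Longrightarrow> finite B \<Longrightarrow> card A + card (B - A) = card B + card (A - B)"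
  using card_Int_Diff[of A B] card_Int_Diff[of B A] by (simp add: Int_commute)

definition bicoloured :: "('a \<Rightarrow> 'a \<Rightarrow> bool) \<Rightarrow> ('a \<Rightarrow> bool) \<Rightarrow> bool" where
  "bicoloured adj blk \<longleftrightarrow>
     (\<forall>x y. adj x y \<longrightarrow> adj y x) \<and> (\<forall>x. \<not> adj x x) \<and> (\<forall>x y. adj x y \<longrightarrow> blk x \<noteq> blk y)"

lemma wf_pos_iff: "wf_pos (adj, blk, V) \<longleftrightarrow> finite V \<and> bicoloured adj blk"
  by (simp add: wf_pos_def bicoloured_def)

lemma bicoloured_sym: "bicoloured adj blk \<Longrightarrow> adj x y \<Longrightarrow> adj y x"
  and bicoloured_irrefl: "bicoloured adj blk \<Longrightarrow> \<not> adj x x"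
  and bicoloured_colour: "bicoloured adj blk \<Longrightarrow> adj x y \<Longrightarrow> blk x \<noteq> blk y"
  by (auto simp: bicoloured_def)

lemma bicoloured_Not: "bicoloured adj blk \<Longrightarrow> bicoloured adj (\<lambda>x. \<not> blk x)"
  by (auto simp: bicoloured_def)

definition moves :: "('a \<Rightarrow> 'a \<Rightarrow> bool) \<Rightarrow> ('a \<Rightarrow> bool) \<Rightarrow> 'a set \<Rightarrow> 'a set" where
  "moves adj c V = {x \<in> V. c x \<and> (\<exists>y\<in>V. adj x y)}"

lemma ILs_eq_Max:
  "finite V \<Longrightarrow> has_edge adj V \<Longrightarrow> ILs adj blk V =
     Max ((\<lambda>x. int (card (cnbhd adj V x)) + IRs adj blk (V - cnbhd adj V x)) ` moves adj blk V)"
  by (subst ILs.simps) (simp add: moves_def)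

lemma IRs_eq_Min:
  "finite V \<Longrightarrow> has_edge adj V \<Longrightarrow> IRs adj blk V =
     Min ((\<lambda>x. ILs adj blk (V - cnbhd adj V x) - int (card (cnbhd adj V x))) ` moves adj (\<lambda>x. \<not> blk x) V)"
  by (subst IRs.simps) (simp add: moves_def)

lemma ILs_edgeless: "finite V \<Longrightarrow> \<not> has_edge adj V \<Longrightarrow> ILs adj blk V = bal blk V"
  and IRs_edgeless: "finite V \<Longrightarrow> \<not> has_edge adj V \<Longrightarrow> IRs adj blk V = bal blk V"
  by (simp_all add: ILs.simps IRs.simps)

lemma has_edge_if_moves: "x \<in> moves adj c V \<Longrightarrow> has_edge adj V"
  by (auto simp: moves_def has_edge_def)

lemma moves_nonempty: "bicoloured adj blk \<Longrightarrow> has_edge adj V \<Longrightarrow> moves adj blk V \<noteq> {}"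
  unfolding has_edge_def moves_def bicoloured_def by blast

lemma ILs_ge_move:
  "finite V \<Longrightarrow> x \<in> moves adj blk V \<Longrightarrow>
     int (card (cnbhd adj V x)) + IRs adj blk (V - cnbhd adj V x) \<le> ILs adj blk V"
  by (auto simp: ILs_eq_Max has_edge_if_moves moves_def intro!: Max_ge)

lemma IRs_le_move:
  "finite V \<Longrightarrow> x \<in> moves adj (\<lambda>x. \<not> blk x) V \<Longrightarrow>
     IRs adj blk V \<le> ILs adj blk (V - cnbhd adj V x) - int (card (cnbhd adj V x))"
  by (auto simp: IRs_eq_Min has_edge_if_moves moves_def intro!: Min_le)

lemma ILs_optimal_move:
  assumes "finite V" "has_edge adj V" "bicoloured adj blk"
  obtains x where "x \<in> moves adj blk V"
    "ILs adj blk V = int (card (cnbhd adj V x)) + IRs adj blk (V - cnbhd adj V x)"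
proof -
  let ?f = "\<lambda>x. int (card (cnbhd adj V x)) + IRs adj blk (V - cnbhd adj V x)"
  have "Max (?f ` moves adj blk V) \<in> ?f ` moves adj blk V"
    using assms moves_nonempty by (intro Max_in) (auto simp: moves_def)
  then show ?thesis
    using that by (auto simp: ILs_eq_Max assms)
qed

lemma IRs_optimal_move:
  assumes "finite V" "has_edge adj V" "bicoloured adj blk"
  obtains x where "x \<in> moves adj (\<lambda>x. \<not> blk x) V"
    "IRs adj blk V = ILs adj blk (V - cnbhd adj V x) - int (card (cnbhd adj V x))"
proof -
  let ?f = "\<lambda>x. ILs adj blk (V - cnbhd adj V x) - int (card (cnbhd adj V x))"
  have "Min (?f ` moves adj (\<lambda>x. \<not> blk x) V) \<in> ?f ` moves adj (\<lambda>x. \<not> blk x) V"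
    using assms moves_nonempty[OF bicoloured_Not] by (intro Min_in) (auto simp: moves_def)
  then show ?thesis
    using that by (auto simp: IRs_eq_Min assms)
qed

lemma bal_Un: "finite A \<Longrightarrow> finite B \<Longrightarrow> A \<inter> B = {} \<Longrightarrow> bal blk (A \<union> B) = bal blk A + bal blk B"
proof -
  assume "finite A" "finite B" "A \<inter> B = {}"
  moreover have "{v \<in> A \<union> B. P v} = {v \<in> A. P v} \<union> {v \<in> B. P v}" for P by auto
  ultimately show ?thesis
    by (simp add: bal_def card_Un_disjoint disjoint_iff)
qed

lemma bal_eq_card_minus_white:
  "finite V \<Longrightarrow> bal blk V = int (card V) - 2 * int (card {v \<in> V. \<not> blk v})"
  using card_Int_Diff[of V "Collect blk"] by (simp add: bal_def Int_def set_diff_eq)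

lemma bal_image:
  assumes "inj f" "\<And>u. blk (f u) = blk' u"
  shows "bal blk (f ` V) = bal blk' V"
proof -
  have "{v \<in> f ` V. blk v} = f ` {v \<in> V. blk' v}" "{v \<in> f ` V. \<not> blk v} = f ` {v \<in> V. \<not> blk' v}"
    using assms(2) by auto
  then show ?thesis
    using assms(1) by (simp add: bal_def card_image inj_on_subset)
qed

lemma ILs_IRs_image:
  assumes "inj f" and adj: "\<And>u v. adj (f u) (f v) = adj' u v" and blk: "\<And>u. blk (f u) = blk' u"
    and "finite V"
  shows "ILs adj blk (f ` V) = ILs adj' blk' V \<and> IRs adj blk (f ` V) = IRs adj' blk' V"
  using \<open>finite V\<close>
proof (induction V rule: finite_psubset_induct)
  case (psubset V)
  have cnbhd: "cnbhd adj (f ` V) (f x) = f ` cnbhd adj' V x" for x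
    using adj by (auto simp: cnbhd_def)
  have rest: "f ` V - cnbhd adj (f ` V) (f x) = f ` (V - cnbhd adj' V x)" for x
    using \<open>inj f\<close> by (simp add: cnbhd image_set_diff)
  have card: "card (cnbhd adj (f ` V) (f x)) = card (cnbhd adj' V x)" for x
    using \<open>inj f\<close> by (simp add: cnbhd card_image inj_on_subset)
  have moves: "moves adj c (f ` V) = f ` moves adj' c' V" if "\<And>u. c (f u) = c' u" for c c'
    using adj that by (auto simp: moves_def)
  have edge: "has_edge adj (f ` V) = has_edge adj' V"
    using adj by (auto simp: has_edge_def)
  have IH: "ILs adj blk (f ` (V - cnbhd adj' V x)) = ILs adj' blk' (V - cnbhd adj' V x)
      \<and> IRs adj blk (f ` (V - cnbhd adj' V x)) = IRs adj' blk' (V - cnbhd adj' V x)"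
    if "x \<in> moves adj' c V" for x c
    using that by (intro psubset.IH Diff_cnbhd_psubset) (simp add: moves_def)
  show ?case
  proof (cases "has_edge adj' V")
    case False
    then show ?thesis
      using psubset.hyps edge bal_image[of f blk blk', OF \<open>inj f\<close> blk]
      by (simp add: ILs_edgeless IRs_edgeless)
  next
    case True
    have "ILs adj blk (f ` V) = ILs adj' blk' V"
      using True psubset.hyps IH
      by (simp add: ILs_eq_Max edge moves[of blk blk'] blk image_image card rest cong: image_cong)
    moreover have "IRs adj blk (f ` V) = IRs adj' blk' V"
      using True psubset.hyps IH
      by (simp add: IRs_eq_Min edge moves[of "\<lambda>x. \<not> blk x" "\<lambda>x. \<not> blk' x"] blk image_image card rest
          cong: image_cong)
    ultimately show ?thesis ..
  qed
qed

definition separated :: "('a \<Rightarrow> 'a \<Rightarrow> bool) \<Rightarrow> 'a set \<Rightarrow> 'a set \<Rightarrow> bool" where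
  "separated adj S T \<longleftrightarrow> S \<inter> T = {} \<and> (\<forall>u\<in>S. \<forall>v\<in>T. \<not> adj u v \<and> \<not> adj v u)"

lemma separated_mono: "separated adj S T \<Longrightarrow> S' \<subseteq> S \<Longrightarrow> T' \<subseteq> T \<Longrightarrow> separated adj S' T'"
  unfolding separated_def by blast

lemma separated_cnbhd_left: "separated adj S T \<Longrightarrow> x \<in> S \<Longrightarrow> cnbhd adj (S \<union> T) x = cnbhd adj S x"
  and separated_cnbhd_right: "separated adj S T \<Longrightarrow> x \<in> T \<Longrightarrow> cnbhd adj (S \<union> T) x = cnbhd adj T x"
  by (auto simp: separated_def cnbhd_def)

lemma ILs_IRs_Un_edgeless:
  assumes "bicoloured adj blk" "finite S" "finite T" "separated adj S T" "\<not> has_edge adj T"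
  shows "ILs adj blk (S \<union> T) = ILs adj blk S + bal blk T \<and> IRs adj blk (S \<union> T) = IRs adj blk S + bal blk T"
  using \<open>finite S\<close> \<open>separated adj S T\<close>
proof (induction S rule: finite_psubset_induct)
  case (psubset S)
  have edge: "has_edge adj (S \<union> T) = has_edge adj S"
    using psubset.prems assms(5) by (auto simp: has_edge_def separated_def)
  have moves: "moves adj c (S \<union> T) = moves adj c S" for c
    using psubset.prems assms(5) by (auto simp: moves_def has_edge_def separated_def)
  have IH: "ILs adj blk ((S - cnbhd adj S x) \<union> T) = ILs adj blk (S - cnbhd adj S x) + bal blk T
      \<and> IRs adj blk ((S - cnbhd adj S x) \<union> T) = IRs adj blk (S - cnbhd adj S x) + bal blk T"
    if "x \<in> moves adj c S" for x c
    using that psubset.prems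
    by (intro psubset.IH Diff_cnbhd_psubset) (auto simp: moves_def elim: separated_mono)
  have simps: "cnbhd adj (S \<union> T) x = cnbhd adj S x" "S \<union> T - cnbhd adj S x = (S - cnbhd adj S x) \<union> T"
    if "x \<in> moves adj c S" for x c
    using that separated_cnbhd_left[OF psubset.prems] cnbhd_subset[of x S adj] psubset.prems
    by (auto simp: moves_def separated_def)
  have fin: "finite (S \<union> T)" "finite (moves adj c S)" for c
    using psubset.hyps assms(3) by (auto simp: moves_def)
  show ?case
  proof (cases "has_edge adj S")
    case False
    then show ?thesis
      using edge fin psubset.hyps psubset.prems assms(3)
      by (simp add: ILs_edgeless IRs_edgeless bal_Un separated_def)
  next
    case True
    have "ILs adj blk (S \<union> T) = Max ((\<lambda>x. (int (card (cnbhd adj S x)) + IRs adj blk (S - cnbhd adj S x))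
        + bal blk T) ` moves adj blk S)"
      using True fin IH simps by (simp add: ILs_eq_Max edge moves add.assoc cong: image_cong)
    also have "\<dots> = ILs adj blk S + bal blk T"
      using True fin moves_nonempty[OF assms(1)] psubset.hyps by (simp add: Max_add_commute ILs_eq_Max)
    finally have "ILs adj blk (S \<union> T) = ILs adj blk S + bal blk T" .
    moreover have "IRs adj blk (S \<union> T) = Min ((\<lambda>x. (ILs adj blk (S - cnbhd adj S x) - int (card (cnbhd adj S x)))
        + bal blk T) ` moves adj (\<lambda>x. \<not> blk x) S)"
      using True fin IH simps by (simp add: IRs_eq_Min edge moves algebra_simps cong: image_cong)
    moreover have "\<dots> = IRs adj blk S + bal blk T"
      using True fin moves_nonempty[OF bicoloured_Not[OF assms(1)]] psubset.hyps
      by (simp add: Min_add_commute IRs_eq_Min)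
    ultimately show ?thesis by simp
  qed
qed

lemma free_move_isolated_black:
  assumes "bicoloured adj blk" "finite V" "x \<in> V" "blk x" "\<forall>y\<in>V. \<not> adj x y"
  shows "ILs adj blk V = int (card (cnbhd adj V x)) + ILs adj blk (V - cnbhd adj V x)
       \<and> IRs adj blk V = int (card (cnbhd adj V x)) + IRs adj blk (V - cnbhd adj V x)"
proof -
  have "ILs adj blk ((V - {x}) \<union> {x}) = ILs adj blk (V - {x}) + bal blk {x}
      \<and> IRs adj blk ((V - {x}) \<union> {x}) = IRs adj blk (V - {x}) + bal blk {x}"
    using assms bicoloured_sym[OF assms(1)] bicoloured_irrefl[OF assms(1)]
    by (intro ILs_IRs_Un_edgeless) (auto simp: separated_def has_edge_def)
  moreover have "cnbhd adj V x = {x}"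
    using assms(5) by (auto simp: cnbhd_def)
  moreover have "bal blk {x} = 1"
    using assms(4) bal_eq_card_minus_white[of "{x}" blk] by simp
  ultimately show ?thesis
    using assms(3) by (simp add: insert_absorb)
qed

lemma ILs_swap_colours:
  assumes "finite V" "bicoloured adj blk"
  shows "ILs adj blk V = - IRs adj (\<lambda>x. \<not> blk x) V"
  using assms
proof (induction V arbitrary: blk rule: finite_psubset_induct)
  case (psubset V)
  show ?case
  proof (cases "has_edge adj V")
    case False
    then show ?thesis
      using psubset.hyps by (simp add: ILs_edgeless IRs_edgeless bal_def)
  next
    case True
    have IH: "IRs adj blk (V - cnbhd adj V x) = - ILs adj (\<lambda>x. \<not> blk x) (V - cnbhd adj V x)"
      if "x \<in> moves adj c V" for x c
      using psubset.IH[OF Diff_cnbhd_psubset bicoloured_Not[OF psubset.prems], of x] that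
      by (simp add: moves_def)
    have "finite (moves adj blk V)" "moves adj blk V \<noteq> {}"
      using psubset.hyps True moves_nonempty[OF psubset.prems] by (auto simp: moves_def)
    then have "- IRs adj (\<lambda>x. \<not> blk x) V = Max (uminus ` (\<lambda>x. ILs adj (\<lambda>x. \<not> blk x) (V - cnbhd adj V x)
        - int (card (cnbhd adj V x))) ` moves adj blk V)"
      using True psubset.hyps by (simp add: IRs_eq_Min)
    also have "\<dots> = ILs adj blk V"
      using True psubset.hyps IH by (simp add: ILs_eq_Max image_image cong: image_cong)
    finally show ?thesis by simp
  qed
qed

lemma IRs_swap_colours: "finite V \<Longrightarrow> bicoloured adj blk \<Longrightarrow> IRs adj blk V = - ILs adj (\<lambda>x. \<not> blk x) V"
  using ILs_swap_colours[OF _ bicoloured_Not, of V adj blk] by simp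

section \<open>Moving first never hurts Left\<close>

definition isolated_white :: "('a \<Rightarrow> 'a \<Rightarrow> bool) \<Rightarrow> ('a \<Rightarrow> bool) \<Rightarrow> 'a set \<Rightarrow> 'a set" where
  "isolated_white adj blk V = {w \<in> V. \<not> blk w \<and> (\<forall>y\<in>V. \<not> adj w y)}"

lemma isolated_white_subset_Diff_cnbhd:
  "bicoloured adj blk \<Longrightarrow> z \<in> moves adj c V \<Longrightarrow>
     isolated_white adj blk V \<subseteq> isolated_white adj blk (V - cnbhd adj V z)"
  by (auto simp: isolated_white_def moves_def cnbhd_def dest: bicoloured_sym)

lemma ILs_IRs_le_card_minus_isolated_white:
  assumes "bicoloured adj blk" "finite V"
  shows "ILs adj blk V \<le> int (card V) - 2 * int (card (isolated_white adj blk V))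
       \<and> IRs adj blk V \<le> int (card V) - 2 * int (card (isolated_white adj blk V))"
  using assms(2)
proof (induction V rule: finite_psubset_induct)
  case (psubset V)
  let ?b = "\<lambda>V. int (card V) - 2 * int (card (isolated_white adj blk V))"
  have step: "int (card (cnbhd adj V z)) + ?b (V - cnbhd adj V z) \<le> ?b V"
    and IH: "ILs adj blk (V - cnbhd adj V z) \<le> ?b (V - cnbhd adj V z)
      \<and> IRs adj blk (V - cnbhd adj V z) \<le> ?b (V - cnbhd adj V z)"
    if z: "z \<in> moves adj c V" for z c
  proof -
    have "z \<in> V" using z by (simp add: moves_def)
    have "card (isolated_white adj blk V) \<le> card (isolated_white adj blk (V - cnbhd adj V z))"
      using psubset.hyps isolated_white_subset_Diff_cnbhd[OF assms(1) z]
      by (intro card_mono) (auto simp: isolated_white_def)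
    then show "int (card (cnbhd adj V z)) + ?b (V - cnbhd adj V z) \<le> ?b V"
      using card_Diff_cnbhd[OF psubset.hyps \<open>z \<in> V\<close>, of adj] by linarith
    show "ILs adj blk (V - cnbhd adj V z) \<le> ?b (V - cnbhd adj V z)
      \<and> IRs adj blk (V - cnbhd adj V z) \<le> ?b (V - cnbhd adj V z)"
      by (rule psubset.IH[OF Diff_cnbhd_psubset[OF \<open>z \<in> V\<close>]])
  qed
  show ?case
  proof (cases "has_edge adj V")
    case False
    then have "isolated_white adj blk V = {v \<in> V. \<not> blk v}"
      by (auto simp: isolated_white_def has_edge_def)
    then show ?thesis
      using False psubset.hyps by (simp add: ILs_edgeless IRs_edgeless bal_eq_card_minus_white)
  next
    case True
    obtain x where "x \<in> moves adj blk V"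
      "ILs adj blk V = int (card (cnbhd adj V x)) + IRs adj blk (V - cnbhd adj V x)"
      using ILs_optimal_move[OF psubset.hyps True assms(1)] .
    moreover obtain y where "y \<in> moves adj (\<lambda>x. \<not> blk x) V"
      "IRs adj blk V = ILs adj blk (V - cnbhd adj V y) - int (card (cnbhd adj V y))"
      using IRs_optimal_move[OF psubset.hyps True assms(1)] .
    ultimately show ?thesis
      using step IH by fastforce
  qed
qed

lemma whites_isolated_after_reply:
  assumes "bicoloured adj blk" "x \<in> V" "blk x" "adj x y" "\<not> has_edge adj (V - cnbhd adj V x)"
  shows "{w \<in> V - cnbhd adj V x. \<not> blk w} \<subseteq> isolated_white adj blk (V - cnbhd adj V y)"
proof
  fix w assume w: "w \<in> {w \<in> V - cnbhd adj V x. \<not> blk w}"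
  have "\<not> blk y" "adj y x"
    using assms bicoloured_colour bicoloured_sym by metis+
  have "\<not> adj w z" if z: "z \<in> V - cnbhd adj V y" for z
  proof
    assume "adj w z"
    then have "z \<in> cnbhd adj V x"
      using assms(5) w z unfolding has_edge_def by blast
    moreover have "z \<noteq> x"
      using z assms(2) \<open>adj y x\<close> by (auto simp: cnbhd_def)
    ultimately have "\<not> blk z"
      using assms(1,3) bicoloured_colour by (fastforce simp: cnbhd_def)
    then show False
      using w \<open>adj w z\<close> bicoloured_colour[OF assms(1)] by fastforce
  qed
  moreover have "w \<notin> cnbhd adj V y"
    using assms(1,4) w \<open>\<not> blk y\<close> by (auto simp: cnbhd_def dest: bicoloured_colour)
  ultimately show "w \<in> isolated_white adj blk (V - cnbhd adj V y)"
    using w by (auto simp: isolated_white_def)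
qed

lemma IRs_free_black_move_edgeless_rest:
  assumes bic: "bicoloured adj blk" and fin: "finite V" and x: "x \<in> V" "blk x"
    and y: "y \<in> V" "adj x y" and rest: "\<not> has_edge adj (V - cnbhd adj V x)"
  shows "IRs adj blk V \<le> int (card (cnbhd adj V x)) + IRs adj blk (V - cnbhd adj V x)"
proof -
  define Nx Ny H where "Nx = cnbhd adj V x" and "Ny = cnbhd adj V y" and "H = V - Nx"
  \<comment> \<open>Right answers the free move in advance at the white neighbour y of x: every white vertex
    outside N[x] is then isolated and will be credited to Right.\<close>
  have "y \<in> moves adj (\<lambda>x. \<not> blk x) V"
    using y x bic by (auto simp: moves_def dest: bicoloured_colour bicoloured_sym)
  then have "IRs adj blk V \<le> ILs adj blk (V - Ny) - int (card Ny)"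
    unfolding Ny_def by (rule IRs_le_move[OF fin])
  moreover have "ILs adj blk (V - Ny) \<le> int (card (V - Ny)) - 2 * int (card {w \<in> H. \<not> blk w})"
  proof -
    have "card {w \<in> H. \<not> blk w} \<le> card (isolated_white adj blk (V - Ny))"
      using whites_isolated_after_reply[OF bic x y(2) rest] fin
      by (intro card_mono) (auto simp: H_def Nx_def Ny_def isolated_white_def)
    then show ?thesis
      using ILs_IRs_le_card_minus_isolated_white[OF bic, of "V - Ny"] fin by simp
  qed
  ultimately show ?thesis
    using rest fin card_Diff_cnbhd[OF fin x(1), of adj] card_Diff_cnbhd[OF fin y(1), of adj]
    by (simp add: IRs_edgeless bal_eq_card_minus_white H_def Nx_def Ny_def)
qed

lemma IRs_free_black_move_step:
  assumes bic: "bicoloured adj blk" and fin: "finite V" and x: "x \<in> V" "blk x"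
    and IH: "\<And>W z. W \<subset> V \<Longrightarrow> z \<in> W \<Longrightarrow> blk z \<Longrightarrow>
      ILs adj blk W \<le> int (card (cnbhd adj W z)) + ILs adj blk (W - cnbhd adj W z)"
  shows "IRs adj blk V \<le> int (card (cnbhd adj V x)) + IRs adj blk (V - cnbhd adj V x)"
proof (cases "\<exists>y\<in>V. adj x y")
  case False
  then show ?thesis
    using free_move_isolated_black[OF bic fin x] by simp
next
  case True
  then obtain y0 where y0: "y0 \<in> V" "adj x y0" by blast
  define Nx H where "Nx = cnbhd adj V x" and "H = V - Nx"
  have "finite H" "finite Nx"
    using fin by (simp_all add: H_def Nx_def finite_cnbhd)
  show ?thesis
  proof (cases "has_edge adj H")
    case True
    \<comment> \<open>Play Right's best answer y to the free move first, then the free move at x by induction.\<close>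
    obtain y where y: "y \<in> moves adj (\<lambda>x. \<not> blk x) H"
      "IRs adj blk H = ILs adj blk (H - cnbhd adj H y) - int (card (cnbhd adj H y))"
      using IRs_optimal_move[OF \<open>finite H\<close> True bic] .
    define Ny where "Ny = cnbhd adj V y"
    have "y \<in> moves adj (\<lambda>x. \<not> blk x) V" "y \<notin> Nx"
      using y(1) by (auto simp: moves_def H_def)
    then have "x \<notin> Ny"
      using x bic by (auto simp: Ny_def Nx_def moves_def cnbhd_def dest: bicoloured_sym)
    have "IRs adj blk V \<le> ILs adj blk (V - Ny) - int (card Ny)"
      unfolding Ny_def by (rule IRs_le_move[OF fin \<open>y \<in> moves adj (\<lambda>x. \<not> blk x) V\<close>])
    also have "ILs adj blk (V - Ny) \<le> int (card (Nx - Ny)) + ILs adj blk (V - Ny - (Nx - Ny))"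
      using IH[of "V - Ny" x] x \<open>x \<notin> Ny\<close> \<open>y \<in> moves adj (\<lambda>x. \<not> blk x) V\<close>
      by (simp add: Ny_def Nx_def cnbhd_Diff Diff_cnbhd_psubset moves_def)
    also have "V - Ny - (Nx - Ny) = H - (Ny - Nx)"
      by (auto simp: H_def)
    finally have "IRs adj blk V \<le> int (card (Nx - Ny)) + ILs adj blk (H - (Ny - Nx)) - int (card Ny)"
      by simp
    moreover have "card (Nx - Ny) \<le> card Nx" "card (Ny - Nx) \<le> card Ny"
      using \<open>finite Nx\<close> fin by (simp_all add: Ny_def finite_cnbhd card_mono)
    moreover have "cnbhd adj H y = Ny - Nx"
      using \<open>y \<notin> Nx\<close> by (simp add: H_def Ny_def cnbhd_Diff)
    ultimately show ?thesis
      using y(2) by (simp add: Nx_def H_def)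
  next
    case False
    then show ?thesis
      using IRs_free_black_move_edgeless_rest[OF bic fin x y0] by (simp add: H_def Nx_def)
  qed
qed

lemma ILs_ge_black:
  assumes "bicoloured adj blk" "finite V" "z \<in> V" "blk z"
    and "IRs adj blk (V - cnbhd adj V z) \<le> ILs adj blk (V - cnbhd adj V z)"
  shows "int (card (cnbhd adj V z)) + IRs adj blk (V - cnbhd adj V z) \<le> ILs adj blk V"
proof (cases "\<exists>y\<in>V. adj z y")
  case True
  then show ?thesis
    using assms by (intro ILs_ge_move) (auto simp: moves_def)
next
  case False
  then show ?thesis
    using free_move_isolated_black[OF assms(1-4)] assms(5) by simp
qed

lemma ILs_free_black_move_step:
  assumes bic: "bicoloured adj blk" and fin: "finite V" and x: "x \<in> V" "blk x"
    and IH_IRs: "\<And>W z. W \<subset> V \<Longrightarrow> z \<in> W \<Longrightarrow> blk z \<Longrightarrow>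
      IRs adj blk W \<le> int (card (cnbhd adj W z)) + IRs adj blk (W - cnbhd adj W z)"
    and IH_le: "\<And>W. W \<subset> V \<Longrightarrow> IRs adj blk W \<le> ILs adj blk W"
  shows "ILs adj blk V \<le> int (card (cnbhd adj V x)) + ILs adj blk (V - cnbhd adj V x)"
proof (cases "\<exists>y\<in>V. adj x y")
  case False
  then show ?thesis
    using free_move_isolated_black[OF bic fin x] by simp
next
  case True
  then have "has_edge adj V"
    using x by (auto simp: has_edge_def)
  then obtain z where z: "z \<in> moves adj blk V"
    "ILs adj blk V = int (card (cnbhd adj V z)) + IRs adj blk (V - cnbhd adj V z)"
    using ILs_optimal_move[OF fin _ bic] by blast
  define Nx Nz H where "Nx = cnbhd adj V x" and "Nz = cnbhd adj V z" and "H = V - Nx"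
  have "H \<subset> V"
    using x by (simp add: H_def Nx_def Diff_cnbhd_psubset)
  show ?thesis
  proof (cases "z = x")
    case True
    then show ?thesis
      using z(2) IH_le[OF \<open>H \<subset> V\<close>] by (simp add: H_def Nx_def)
  next
    case False
    have "x \<notin> Nz" "z \<notin> Nx" "z \<in> H"
      using False x z(1) bicoloured_colour[OF bic]
      by (auto simp: Nx_def Nz_def H_def moves_def cnbhd_def)
    have "IRs adj blk (V - Nz) \<le> int (card (Nx - Nz)) + IRs adj blk (V - Nz - (Nx - Nz))"
      using IH_IRs[of "V - Nz" x] x \<open>x \<notin> Nz\<close> z(1)
      by (simp add: Nz_def Nx_def cnbhd_Diff Diff_cnbhd_psubset moves_def)
    moreover have "int (card (Nz - Nx)) + IRs adj blk (H - (Nz - Nx)) \<le> ILs adj blk H"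
    proof -
      have "cnbhd adj H z = Nz - Nx"
        using \<open>z \<notin> Nx\<close> by (simp add: H_def Nz_def cnbhd_Diff)
      moreover have "H - cnbhd adj H z \<subset> V"
        using \<open>H \<subset> V\<close> \<open>z \<in> H\<close> Diff_cnbhd_psubset by blast
      ultimately show ?thesis
        using ILs_ge_black[OF bic _ \<open>z \<in> H\<close>] IH_le fin z(1) by (auto simp: H_def moves_def)
    qed
    moreover have "V - Nz - (Nx - Nz) = H - (Nz - Nx)"
      by (auto simp: H_def)
    moreover have "card Nz + card (Nx - Nz) = card Nx + card (Nz - Nx)"
      using fin by (simp add: Nx_def Nz_def finite_cnbhd card_plus_card_Diff_commute)
    ultimately show ?thesis
      using z(2) by (simp add: Nx_def Nz_def H_def)
  qed
qed

lemma free_black_move_bounds: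
  assumes "bicoloured adj blk" "finite V"
  shows "(\<forall>x\<in>V. blk x \<longrightarrow>
            ILs adj blk V \<le> int (card (cnbhd adj V x)) + ILs adj blk (V - cnbhd adj V x)
          \<and> IRs adj blk V \<le> int (card (cnbhd adj V x)) + IRs adj blk (V - cnbhd adj V x))
       \<and> IRs adj blk V \<le> ILs adj blk V"
  using assms(2)
proof (induction V rule: finite_psubset_induct)
  case (psubset V)
  have IRs_bound: "IRs adj blk V \<le> int (card (cnbhd adj V x)) + IRs adj blk (V - cnbhd adj V x)"
    if "x \<in> V" "blk x" for x
    using IRs_free_black_move_step[OF assms(1) psubset.hyps that] psubset.IH by blast
  moreover have "ILs adj blk V \<le> int (card (cnbhd adj V x)) + ILs adj blk (V - cnbhd adj V x)"
    if "x \<in> V" "blk x" for x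
    using ILs_free_black_move_step[OF assms(1) psubset.hyps that] psubset.IH by blast
  moreover have "IRs adj blk V \<le> ILs adj blk V"
  proof (cases "has_edge adj V")
    case False
    then show ?thesis
      using psubset.hyps by (simp add: ILs_edgeless IRs_edgeless)
  next
    case True
    then obtain z where "z \<in> moves adj blk V"
      "ILs adj blk V = int (card (cnbhd adj V z)) + IRs adj blk (V - cnbhd adj V z)"
      using ILs_optimal_move[OF psubset.hyps _ assms(1)] by blast
    then show ?thesis
      using IRs_bound[of z] by (simp add: moves_def)
  qed
  ultimately show ?case by blast
qed

lemma IRs_le_ILs: "bicoloured adj blk \<Longrightarrow> finite V \<Longrightarrow> IRs adj blk V \<le> ILs adj blk V"
  using free_black_move_bounds by blast

section \<open>Mirror strategies\<close>

\<comment> \<open>Disjointness of the closed neighbourhoods of u and \<tau> u (distance at least 3) keeps the reply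
  \<tau> y legal after a move at y, and makes it remove exactly \<tau> ` N[y].\<close>
definition mirror_symmetry :: "('a \<Rightarrow> 'a \<Rightarrow> bool) \<Rightarrow> ('a \<Rightarrow> bool) \<Rightarrow> ('a \<Rightarrow> 'a) \<Rightarrow> 'a set \<Rightarrow> bool" where
  "mirror_symmetry adj blk \<tau> S \<longleftrightarrow>
     (\<forall>u\<in>S. \<tau> u \<in> S \<and> \<tau> (\<tau> u) = u \<and> blk (\<tau> u) \<noteq> blk u \<and> cnbhd adj S u \<inter> cnbhd adj S (\<tau> u) = {})
     \<and> (\<forall>u\<in>S. \<forall>v\<in>S. adj (\<tau> u) (\<tau> v) = adj u v)"

lemma mirror_symmetry_Not: "mirror_symmetry adj blk \<tau> S \<Longrightarrow> mirror_symmetry adj (\<lambda>x. \<not> blk x) \<tau> S"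
  by (simp add: mirror_symmetry_def)

lemma mirror_symmetry_inj_on: "mirror_symmetry adj blk \<tau> S \<Longrightarrow> inj_on \<tau> S"
  unfolding mirror_symmetry_def by (metis inj_onI)

lemma mirror_symmetry_Diff:
  assumes "mirror_symmetry adj blk \<tau> S" "\<tau> ` R \<subseteq> R"
  shows "mirror_symmetry adj blk \<tau> (S - R)"
proof -
  have "\<tau> u \<in> S - R" if "u \<in> S - R" for u
    using assms that unfolding mirror_symmetry_def by (metis Diff_iff image_subset_iff)
  moreover have "cnbhd adj (S - R) u \<subseteq> cnbhd adj S u" for u
    by (auto simp: cnbhd_def)
  ultimately show ?thesis
    using assms(1) unfolding mirror_symmetry_def by blast
qed

lemma mirror_symmetry_bal: "mirror_symmetry adj blk \<tau> S \<Longrightarrow> bal blk S = 0"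
proof -
  assume m: "mirror_symmetry adj blk \<tau> S"
  then have "\<tau> ` {v \<in> S. blk v} = {v \<in> S. \<not> blk v}"
    unfolding mirror_symmetry_def by (auto simp: image_iff) metis
  then have "card {v \<in> S. \<not> blk v} = card {v \<in> S. blk v}"
    using mirror_symmetry_inj_on[OF m] by (metis (no_types, lifting) card_image inj_on_subset mem_Collect_eq subsetI)
  then show ?thesis
    by (simp add: bal_def)
qed

lemma mirror_cnbhd:
  assumes m: "mirror_symmetry adj blk \<tau> S" and "u \<in> S"
  shows "cnbhd adj S (\<tau> u) = \<tau> ` cnbhd adj S u"
proof -
  have "w \<in> \<tau> ` cnbhd adj S u" if "w \<in> S" "adj (\<tau> u) w" for w
    using m that \<open>u \<in> S\<close> unfolding mirror_symmetry_def cnbhd_def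
    by (metis (no_types, lifting) image_eqI insertCI mem_Collect_eq)
  then show ?thesis
    using m \<open>u \<in> S\<close> unfolding mirror_symmetry_def cnbhd_def by auto
qed

lemma mirror_reply_cnbhd:
  assumes m: "mirror_symmetry adj blk \<tau> S" and "y \<in> S"
  shows "cnbhd adj (S - cnbhd adj S y) (\<tau> y) = \<tau> ` cnbhd adj S y"
proof -
  have "cnbhd adj S y \<inter> cnbhd adj S (\<tau> y) = {}"
    using m \<open>y \<in> S\<close> by (simp add: mirror_symmetry_def)
  moreover have "\<tau> y \<in> cnbhd adj S (\<tau> y)"
    by (simp add: cnbhd_def)
  ultimately show ?thesis
    using mirror_cnbhd[OF assms] cnbhd_Diff[of "\<tau> y" "cnbhd adj S y" adj S] by blast
qed

lemma mirror_symmetry_Diff_move_reply: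
  assumes m: "mirror_symmetry adj blk \<tau> S" and "y \<in> S"
  shows "mirror_symmetry adj blk \<tau> (S - (cnbhd adj S y \<union> \<tau> ` cnbhd adj S y))"
proof (rule mirror_symmetry_Diff[OF m])
  show "\<tau> ` (cnbhd adj S y \<union> \<tau> ` cnbhd adj S y) \<subseteq> cnbhd adj S y \<union> \<tau> ` cnbhd adj S y"
    using m cnbhd_subset[OF \<open>y \<in> S\<close>, of adj] by (auto simp: mirror_symmetry_def image_iff subset_iff)
qed

lemma ILs_ge_mirror_reply:
  assumes fin: "finite S" "finite T" and m: "mirror_symmetry adj blk \<tau> S" and sep: "separated adj S T"
    and y: "y \<in> moves adj (\<lambda>x. \<not> blk x) S"
  defines "N \<equiv> cnbhd adj S y"
  shows "int (card N) + IRs adj blk ((S - (N \<union> \<tau> ` N)) \<union> T) \<le> ILs adj blk ((S - N) \<union> T)"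
proof -
  obtain y1 where y1: "y \<in> S" "\<not> blk y" "y1 \<in> S" "adj y y1"
    using y by (auto simp: moves_def)
  have reply: "cnbhd adj (S - N) (\<tau> y) = \<tau> ` N"
    using mirror_reply_cnbhd[OF m y1(1)] by (simp add: N_def)
  have "\<tau> y \<in> S - N"
    using m y1(1) by (auto simp: mirror_symmetry_def N_def cnbhd_def)
  moreover have "\<tau> y1 \<in> S - N"
    using reply y1 cnbhd_subset[OF \<open>\<tau> y \<in> S - N\<close>, of adj] by (auto simp: N_def cnbhd_def)
  moreover have "blk (\<tau> y)" "adj (\<tau> y) (\<tau> y1)"
    using m y1 by (auto simp: mirror_symmetry_def)
  ultimately have "\<tau> y \<in> moves adj blk ((S - N) \<union> T)"
    by (auto simp: moves_def)
  then have "int (card (cnbhd adj ((S - N) \<union> T) (\<tau> y)))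
      + IRs adj blk ((S - N) \<union> T - cnbhd adj ((S - N) \<union> T) (\<tau> y)) \<le> ILs adj blk ((S - N) \<union> T)"
    using fin by (intro ILs_ge_move) auto
  moreover have "cnbhd adj ((S - N) \<union> T) (\<tau> y) = \<tau> ` N"
    using separated_cnbhd_left[OF separated_mono[OF sep] \<open>\<tau> y \<in> S - N\<close>] reply by blast
  moreover have "card (\<tau> ` N) = card N"
    using mirror_symmetry_inj_on[OF m] cnbhd_subset[OF y1(1)]
    by (simp add: N_def card_image inj_on_subset)
  moreover have "(S - N) \<union> T - \<tau> ` N = (S - (N \<union> \<tau> ` N)) \<union> T"
    using sep reply cnbhd_subset[OF \<open>\<tau> y \<in> S - N\<close>, of adj] by (auto simp: separated_def)
  ultimately show ?thesis by simp
qed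

lemma IRs_mirror_step:
  assumes bic: "bicoloured adj blk" and fin: "finite S" "finite T"
    and m: "mirror_symmetry adj blk \<tau> S" and sep: "separated adj S T"
    and IH: "\<And>S' T'. S' \<union> T' \<subset> S \<union> T \<Longrightarrow> mirror_symmetry adj blk \<tau> S' \<Longrightarrow> separated adj S' T' \<Longrightarrow>
      IRs adj blk T' \<le> IRs adj blk (S' \<union> T') \<and> ILs adj blk T' \<le> ILs adj blk (S' \<union> T')"
  shows "IRs adj blk T \<le> IRs adj blk (S \<union> T)"
proof (cases "has_edge adj (S \<union> T)")
  case False
  then show ?thesis
    using fin sep mirror_symmetry_bal[OF m]
    by (simp add: IRs_edgeless bal_Un separated_def has_edge_def)
next
  case True
  obtain y where y: "y \<in> moves adj (\<lambda>x. \<not> blk x) (S \<union> T)"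
    "IRs adj blk (S \<union> T) = ILs adj blk (S \<union> T - cnbhd adj (S \<union> T) y) - int (card (cnbhd adj (S \<union> T) y))"
    using IRs_optimal_move[OF _ True bic] fin by blast
  show ?thesis
  proof (cases "y \<in> S")
    case True
    define N where "N = cnbhd adj S y"
    have "y \<in> moves adj (\<lambda>x. \<not> blk x) S"
      using y(1) True sep by (auto simp: moves_def separated_def)
    have "N \<subseteq> S"
      using cnbhd_subset[OF True] by (simp add: N_def)
    have "S - (N \<union> \<tau> ` N) \<union> T \<subset> S \<union> T"
      using True sep by (auto simp: N_def cnbhd_def separated_def)
    then have "IRs adj blk T \<le> IRs adj blk ((S - (N \<union> \<tau> ` N)) \<union> T)"
      using IH mirror_symmetry_Diff_move_reply[OF m True, folded N_def]
        separated_mono[OF sep, of "S - (N \<union> \<tau> ` N)" T] by blast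
    also have "int (card N) + \<dots> \<le> ILs adj blk ((S - N) \<union> T)"
      using ILs_ge_mirror_reply[OF fin m sep \<open>y \<in> moves adj (\<lambda>x. \<not> blk x) S\<close>] by (simp add: N_def)
    moreover have "cnbhd adj (S \<union> T) y = N" "S \<union> T - N = (S - N) \<union> T"
      using separated_cnbhd_left[OF sep True] \<open>N \<subseteq> S\<close> sep by (auto simp: N_def separated_def)
    ultimately show ?thesis
      using y(2) by simp
  next
    case False
    define N where "N = cnbhd adj T y"
    have "y \<in> T" "y \<in> moves adj (\<lambda>x. \<not> blk x) T"
      using y(1) False sep by (auto simp: moves_def separated_def)
    have "IRs adj blk T \<le> ILs adj blk (T - N) - int (card N)"
      unfolding N_def by (rule IRs_le_move[OF fin(2) \<open>y \<in> moves adj (\<lambda>x. \<not> blk x) T\<close>])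
    also have "ILs adj blk (T - N) \<le> ILs adj blk (S \<union> (T - N))"
      using \<open>y \<in> T\<close> sep
      by (intro IH[THEN conjunct2]) (auto simp: N_def cnbhd_def separated_def intro: m elim: separated_mono)
    moreover have "cnbhd adj (S \<union> T) y = N" "S \<union> T - N = S \<union> (T - N)"
      using separated_cnbhd_right[OF sep \<open>y \<in> T\<close>] cnbhd_subset[OF \<open>y \<in> T\<close>] sep
      by (auto simp: N_def separated_def)
    ultimately show ?thesis
      using y(2) by simp
  qed
qed

lemma mirror_strategy:
  assumes bic: "bicoloured adj blk" and "finite S" "finite T"
    and "mirror_symmetry adj blk \<tau> S" "separated adj S T"
  shows "IRs adj blk T \<le> IRs adj blk (S \<union> T) \<and> ILs adj blk T \<le> ILs adj blk (S \<union> T)"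
  using assms(2-5)
proof (induction "card (S \<union> T)" arbitrary: S T rule: less_induct)
  case less
  note fin = less.prems(1,2) and m = less.prems(3) and sep = less.prems(4)
  have IH: "IRs adj blk T' \<le> IRs adj blk (S' \<union> T') \<and> ILs adj blk T' \<le> ILs adj blk (S' \<union> T')"
    if "S' \<union> T' \<subset> S \<union> T" "mirror_symmetry adj blk \<tau> S'" "separated adj S' T'" for S' T'
    using less.hyps[OF psubset_card_mono] that fin by (meson finite_Un finite_subset less_imp_le)
  have IRs_le: "IRs adj blk T \<le> IRs adj blk (S \<union> T)"
    using IRs_mirror_step[OF bic fin m sep] IH by blast
  moreover have "ILs adj blk T \<le> ILs adj blk (S \<union> T)"
  proof (cases "has_edge adj T")
    case True
    obtain x where x: "x \<in> moves adj blk T"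
      "ILs adj blk T = int (card (cnbhd adj T x)) + IRs adj blk (T - cnbhd adj T x)"
      using ILs_optimal_move[OF fin(2) True bic] .
    define N where "N = cnbhd adj T x"
    have "x \<in> T" "x \<in> moves adj blk (S \<union> T)"
      using x(1) by (auto simp: moves_def)
    have "cnbhd adj (S \<union> T) x = N" "S \<union> T - N = S \<union> (T - N)"
      using separated_cnbhd_right[OF sep \<open>x \<in> T\<close>] cnbhd_subset[OF \<open>x \<in> T\<close>] sep
      by (auto simp: N_def separated_def)
    moreover have "IRs adj blk (T - N) \<le> IRs adj blk (S \<union> (T - N))"
      using \<open>x \<in> T\<close> sep
      by (intro IH[THEN conjunct1]) (auto simp: N_def cnbhd_def separated_def intro: m elim: separated_mono)
    ultimately show ?thesis
      using ILs_ge_move[OF _ \<open>x \<in> moves adj blk (S \<union> T)\<close>] fin x(2) by (fastforce simp: N_def)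
  next
    case False
    then have "ILs adj blk T = IRs adj blk T"
      using fin by (simp add: ILs_edgeless IRs_edgeless)
    then show ?thesis
      using IRs_le IRs_le_ILs[OF bic, of "S \<union> T"] fin by simp
  qed
  ultimately show ?case ..
qed

lemma mirror_symmetric_Un_eq:
  assumes bic: "bicoloured adj blk" and fin: "finite S" "finite T"
    and m: "mirror_symmetry adj blk \<tau> S" and sep: "separated adj S T"
  shows "ILs adj blk (S \<union> T) = ILs adj blk T \<and> IRs adj blk (S \<union> T) = IRs adj blk T"
  using mirror_strategy[OF bic fin m sep]
    mirror_strategy[OF bicoloured_Not[OF bic] fin mirror_symmetry_Not[OF m] sep]
    ILs_swap_colours[OF _ bic] IRs_swap_colours[OF _ bic] fin
  by (smt (verit) finite_UnI)

section \<open>The hypercube\<close>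

definition diff_positions :: "bool list \<Rightarrow> bool list \<Rightarrow> nat set" where
  "diff_positions xs ys = {i. i < length xs \<and> xs ! i \<noteq> ys ! i}"

definition hypercube_adj :: "bool list \<Rightarrow> bool list \<Rightarrow> bool" where
  "hypercube_adj xs ys \<longleftrightarrow> length xs = length ys \<and> card (diff_positions xs ys) = 1"

definition hypercube_black :: "bool list \<Rightarrow> bool" where
  "hypercube_black xs \<longleftrightarrow> odd (length (filter id xs))"

lemma hypercube_eq: "hypercube n = (hypercube_adj, hypercube_black, {xs. length xs = n})"
  by (simp add: hypercube_def hypercube_adj_def hypercube_black_def diff_positions_def fun_eq_iff)

lemma finite_diff_positions: "finite (diff_positions xs ys)"
  by (simp add: diff_positions_def)

lemma diff_positions_sym: "length xs = length ys \<Longrightarrow> diff_positions ys xs = diff_positions xs ys"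
  by (auto simp: diff_positions_def)

lemma card_diff_positions_triangle:
  assumes "length a = length b" "length b = length c"
  shows "card (diff_positions a c) \<le> card (diff_positions a b) + card (diff_positions b c)"
proof -
  have "diff_positions a c \<subseteq> diff_positions a b \<union> diff_positions b c"
    using assms by (auto simp: diff_positions_def)
  then have "card (diff_positions a c) \<le> card (diff_positions a b \<union> diff_positions b c)"
    by (simp add: card_mono finite_diff_positions)
  also have "\<dots> \<le> card (diff_positions a b) + card (diff_positions b c)"
    by (rule card_Un_le)
  finally show ?thesis .
qed

lemma hypercube_black_ne_if_odd_diff:
  assumes "length xs = length ys" "odd (card (diff_positions xs ys))"
  shows "hypercube_black xs \<noteq> hypercube_black ys"
proof -
  define A B where "A = {i. i < length xs \<and> xs ! i}" and "B = {i. i < length ys \<and> ys ! i}"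
  have "finite A" "finite B"
    by (simp_all add: A_def B_def)
  have "diff_positions xs ys = (A - B) \<union> (B - A)"
    using assms(1) by (auto simp: diff_positions_def A_def B_def)
  moreover have "card ((A - B) \<union> (B - A)) = card (A - B) + card (B - A)"
    using \<open>finite A\<close> \<open>finite B\<close> by (intro card_Un_disjoint) auto
  ultimately have "card (diff_positions xs ys) = card (A - B) + card (B - A)"
    by simp
  moreover have "card A + card B = card (A - B) + card (B - A) + 2 * card (A \<inter> B)"
    using card_Int_Diff[OF \<open>finite A\<close>, of B] card_Int_Diff[OF \<open>finite B\<close>, of A] by (simp add: Int_commute)
  ultimately have "odd (card A + card B)"
    using assms(2) by simp
  moreover have "hypercube_black xs = odd (card A)" "hypercube_black ys = odd (card B)"
    by (simp_all add: hypercube_black_def A_def B_def length_filter_conv_card)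
  ultimately show ?thesis by auto
qed

lemma bicoloured_hypercube: "bicoloured hypercube_adj hypercube_black"
  unfolding bicoloured_def
proof (intro conjI allI impI)
  fix xs ys assume "hypercube_adj xs ys"
  then show "hypercube_adj ys xs"
    by (simp add: hypercube_adj_def diff_positions_sym)
  show "hypercube_black xs \<noteq> hypercube_black ys"
    using \<open>hypercube_adj xs ys\<close> by (intro hypercube_black_ne_if_odd_diff) (simp_all add: hypercube_adj_def)
next
  fix xs show "\<not> hypercube_adj xs xs"
    by (simp add: hypercube_adj_def diff_positions_def)
qed

definition flip_prefix :: "nat \<Rightarrow> bool list \<Rightarrow> bool list" where
  "flip_prefix k xs = map (\<lambda>i. if i < k then \<not> xs ! i else xs ! i) [0..<length xs]"

lemma length_flip_prefix [simp]: "length (flip_prefix k xs) = length xs"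
  by (simp add: flip_prefix_def)

lemma nth_flip_prefix: "i < length xs \<Longrightarrow> flip_prefix k xs ! i = (if i < k then \<not> xs ! i else xs ! i)"
  by (simp add: flip_prefix_def)

lemma flip_prefix_flip_prefix [simp]: "flip_prefix k (flip_prefix k xs) = xs"
  by (rule nth_equalityI) (simp_all add: nth_flip_prefix)

lemma diff_positions_flip_prefix:
  "length xs = length ys \<Longrightarrow> diff_positions (flip_prefix k xs) (flip_prefix k ys) = diff_positions xs ys"
  by (auto simp: diff_positions_def nth_flip_prefix split: if_splits)

lemma diff_positions_self_flip_prefix: "k \<le> length xs \<Longrightarrow> diff_positions xs (flip_prefix k xs) = {..<k}"
  by (auto simp: diff_positions_def nth_flip_prefix split: if_splits)

lemma card_diff_positions_cnbhd:
  "w \<in> cnbhd hypercube_adj V a \<Longrightarrow> card (diff_positions a w) \<le> 1"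
  by (cases "w = a") (auto simp: cnbhd_def hypercube_adj_def diff_positions_def[of a a])

lemma hypercube_mirror_symmetry:
  assumes "odd k" "3 \<le> k" "k \<le> n"
  shows "mirror_symmetry hypercube_adj hypercube_black (flip_prefix k) {xs. length xs = n}"
  unfolding mirror_symmetry_def
proof (intro conjI ballI)
  fix a :: "bool list" assume a: "a \<in> {xs. length xs = n}"
  then have diff: "card (diff_positions a (flip_prefix k a)) = k"
    using assms(3) by (simp add: diff_positions_self_flip_prefix)
  show "flip_prefix k a \<in> {xs. length xs = n}" "flip_prefix k (flip_prefix k a) = a"
    using a by simp_all
  show "hypercube_black (flip_prefix k a) \<noteq> hypercube_black a"
    using hypercube_black_ne_if_odd_diff[of a "flip_prefix k a"] diff assms(1) by auto
  show "cnbhd hypercube_adj {xs. length xs = n} a \<inter> cnbhd hypercube_adj {xs. length xs = n} (flip_prefix k a) = {}"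
  proof (rule equals0I)
    fix w assume "w \<in> cnbhd hypercube_adj {xs. length xs = n} a
      \<inter> cnbhd hypercube_adj {xs. length xs = n} (flip_prefix k a)"
    then have w: "w \<in> cnbhd hypercube_adj {xs. length xs = n} a"
      "w \<in> cnbhd hypercube_adj {xs. length xs = n} (flip_prefix k a)" by simp_all
    then have "length w = n"
      using a by (auto simp: cnbhd_def)
    then have "card (diff_positions a (flip_prefix k a)) \<le> 2"
      using card_diff_positions_triangle[of a w "flip_prefix k a"] a
        card_diff_positions_cnbhd[OF w(1)] card_diff_positions_cnbhd[OF w(2)]
      by (simp add: diff_positions_sym)
    then show False
      using diff assms(2) by simp
  qed
next
  fix a b :: "bool list" assume "a \<in> {xs. length xs = n}" "b \<in> {xs. length xs = n}"
  then show "hypercube_adj (flip_prefix k a) (flip_prefix k b) = hypercube_adj a b"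
    by (simp add: hypercube_adj_def diff_positions_flip_prefix)
qed

definition sum_adj :: "('a \<Rightarrow> 'a \<Rightarrow> bool) \<Rightarrow> ('b \<Rightarrow> 'b \<Rightarrow> bool) \<Rightarrow> 'a + 'b \<Rightarrow> 'a + 'b \<Rightarrow> bool" where
  "sum_adj adj1 adj2 u v = (case (u, v) of (Inl a, Inl a') \<Rightarrow> adj1 a a' | (Inr b, Inr b') \<Rightarrow> adj2 b b' | _ \<Rightarrow> False)"

lemma sum_adj_simps [simp]:
  "sum_adj adj1 adj2 (Inl a) (Inl a') = adj1 a a'" "sum_adj adj1 adj2 (Inr b) (Inr b') = adj2 b b'"
  "sum_adj adj1 adj2 (Inl a) (Inr b) = False" "sum_adj adj1 adj2 (Inr b) (Inl a) = False"
  by (simp_all add: sum_adj_def)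

lemma psum_eq:
  "psum (adj1, blk1, V1) (adj2, blk2, V2) = (sum_adj adj1 adj2, case_sum blk1 blk2, Inl ` V1 \<union> Inr ` V2)"
  by (simp add: psum_def sum_adj_def fun_eq_iff)

lemma bicoloured_sum_adj:
  "bicoloured adj1 blk1 \<Longrightarrow> bicoloured adj2 blk2 \<Longrightarrow> bicoloured (sum_adj adj1 adj2) (case_sum blk1 blk2)"
  unfolding bicoloured_def sum_adj_def by (auto split: sum.splits)

lemma separated_Inl_Inr: "separated (sum_adj adj1 adj2) (Inl ` S) (Inr ` T)"
  by (auto simp: separated_def)

lemma mirror_symmetry_Inl:
  assumes "mirror_symmetry adj1 blk1 \<tau> S"
  shows "mirror_symmetry (sum_adj adj1 adj2) (case_sum blk1 blk2) (map_sum \<tau> id) (Inl ` S)"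
proof -
  have "cnbhd (sum_adj adj1 adj2) (Inl ` S) (Inl u) = Inl ` cnbhd adj1 S u" for u
    by (auto simp: cnbhd_def)
  then show ?thesis
    using assms by (auto simp: mirror_symmetry_def image_Int[symmetric])
qed

theorem mainTheorem11:
  fixes n :: nat and X :: "'b pos"
  assumes "n \<ge> 3" and "wf_pos X"
  shows "Ls (psum (hypercube n) X) = Ls X \<and> Rs (psum (hypercube n) X) = Rs X"
proof -
  obtain adj blk V where X: "X = (adj, blk, V)"
    by (metis prod_cases3)
  have "finite V" "bicoloured adj blk"
    using assms(2) by (simp_all add: X wf_pos_iff)
  define k where "k = (if odd n then n else n - 1)"
  have k: "odd k" "3 \<le> k" "k \<le> n"
    unfolding k_def using assms(1) by presburger+
  let ?C = "{xs :: bool list. length xs = n}"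
  let ?adj = "sum_adj hypercube_adj adj" and ?blk = "case_sum hypercube_black blk"
  have "mirror_symmetry ?adj ?blk (map_sum (flip_prefix k) id) (Inl ` ?C)"
    using hypercube_mirror_symmetry[OF k] by (rule mirror_symmetry_Inl)
  then have "ILs ?adj ?blk (Inl ` ?C \<union> Inr ` V) = ILs ?adj ?blk (Inr ` V)
      \<and> IRs ?adj ?blk (Inl ` ?C \<union> Inr ` V) = IRs ?adj ?blk (Inr ` V)"
    using \<open>finite V\<close> finite_lists_length_eq[of "UNIV :: bool set" n]
    by (intro mirror_symmetric_Un_eq bicoloured_sum_adj bicoloured_hypercube \<open>bicoloured adj blk\<close>
        separated_Inl_Inr) simp_all
  moreover have "ILs ?adj ?blk (Inr ` V) = ILs adj blk V \<and> IRs ?adj ?blk (Inr ` V) = IRs adj blk V"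
    using \<open>finite V\<close> by (intro ILs_IRs_image) simp_all
  ultimately show ?thesis
    by (simp add: X Ls_def Rs_def hypercube_eq psum_eq)
qed

end
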